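(* Let $b>1$, $p\ge1$, $R\subseteq\{0,\ldots,p-1\}$, let $k$ be the greatest divisor of $p$ coprime with $b$ and $d=p/k$. A state of $\mathcal{A}_{R,p}$ is a multiple of $d$ if and only if it belongs to a $0$-circuit.
   Context: $A_b=\{0,\ldots,b-1\}$. $\mathcal{A}_{R,p}$: complete deterministic automaton over $A_b$ with states $\{0,\ldots,p-1\}$, initial $0$, final $R$, transitions $n\xrightarrow{a}(nb+a)\bmod p$. A $0$-circuit is a circuit all of whose transitions are labelled by the digit $0$. *)

theory Defs
  imports Main "HOL-Computational_Algebra.Primes"
begin

definition aut_states :: "nat \<Rightarrow> nat set" where
  "aut_states p = {0..<p}"

definition aut_alphabet :: "nat \<Rightarrow> nat set" where
  "aut_alphabet b = {0..<b}"

definition aut_delta :: "nat \<Rightarrow> nat \<Rightarrow> nat \<Rightarrow> nat \<Rightarrow> nat" where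
  "aut_delta b p n a = (n * b + a) mod p"

definition zero_circuit :: "nat \<Rightarrow> nat \<Rightarrow> nat list \<Rightarrow> bool" where
  "zero_circuit b p qs \<longleftrightarrow>
     length qs \<ge> 2 \<and> set qs \<subseteq> aut_states p \<and> hd qs = last qs \<and>
     (\<forall>i. Suc i < length qs \<longrightarrow> aut_delta b p (qs ! i) 0 = qs ! Suc i)"

definition on_zero_circuit :: "nat \<Rightarrow> nat \<Rightarrow> nat \<Rightarrow> bool" where
  "on_zero_circuit b p n \<longleftrightarrow> (\<exists>qs. zero_circuit b p qs \<and> n \<in> set qs)"

definition max_coprime_divisor :: "nat \<Rightarrow> nat \<Rightarrow> nat" where
  "max_coprime_divisor b p = (GREATEST k. k dvd p \<and> coprime k b)"

end

theory Submission
  imports Defs "HOL-Number_Theory.Number_Theory"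
begin

text \<open>Reading 0 from state n leads to n b mod p, so n lies on a 0-circuit iff
  n b^m \<equiv> n (mod p) for some m \<ge> 1. Write p = d k with k the largest divisor
  of p coprime to b; then d divides a power of b. If d | n, Euler's theorem
  modulo k gives n b^\<phi>(k) \<equiv> n (mod d k). Conversely, iterating
  n b^m \<equiv> n until the power of b is divisible by d shows d | n.\<close>

lemma coprime_part_decomposition:
  fixes b p :: nat
  assumes "p > 0"
  shows "\<exists>d k. p = d * k \<and> coprime k b \<and> d dvd b ^ p"
  using assms
proof (induction p rule: less_induct)
  case (less p)
  show ?case
  proof (cases "coprime p b")
    case True
    then show ?thesis by (intro exI[of _ 1] exI[of _ p]) auto
  next
    case False
    then obtain q where "prime q" "q dvd gcd p b"
      using coprime_iff_gcd_eq_1 prime_factor_nat by blast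
    then have q: "prime q" "q dvd p" "q dvd b"
      by (meson dvd_trans gcd_dvd1 gcd_dvd2)+
    then obtain p' where p': "p = q * p'" by (elim dvdE)
    have "p' > 0"
      using p' less.prems by (cases p') auto
    then have "p' < p"
      using p' prime_gt_1_nat[OF q(1)] by simp
    then obtain d k where dk: "p' = d * k" "coprime k b" "d dvd b ^ p'"
      using less.IH \<open>p' > 0\<close> by blast
    have "q * d dvd b ^ Suc p'"
      using dk(3) q(3) by (simp add: mult_dvd_mono)
    also have "b ^ Suc p' dvd b ^ p"
      by (rule le_imp_power_dvd) (use \<open>p' < p\<close> in simp)
    finally show ?thesis
      using p' dk by (intro exI[of _ "q * d"] exI[of _ k]) auto
  qed
qed

lemma max_coprime_divisor_greatest:
  fixes b p :: nat
  assumes "p > 0" "k dvd p" "coprime k b"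
  shows "max_coprime_divisor b p dvd p \<and> coprime (max_coprime_divisor b p) b
         \<and> k \<le> max_coprime_divisor b p"
proof -
  have bound: "\<forall>y. y dvd p \<and> coprime y b \<longrightarrow> y \<le> p"
    using assms(1) by (auto intro: dvd_imp_le)
  show ?thesis
    unfolding max_coprime_divisor_def
    using GreatestI_nat[of "\<lambda>k. k dvd p \<and> coprime k b" k p]
      Greatest_le_nat[of "\<lambda>k. k dvd p \<and> coprime k b" k p] assms bound
    by blast
qed

lemma max_coprime_divisor_cofactor:
  fixes b p :: nat
  assumes "p > 0"
  shows "p = (p div max_coprime_divisor b p) * max_coprime_divisor b p
         \<and> coprime (max_coprime_divisor b p) b
         \<and> (p div max_coprime_divisor b p) dvd b ^ p"
proof -
  obtain d k where dk: "p = d * k" "coprime k b" "d dvd b ^ p"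
    using coprime_part_decomposition[OF assms] by blast
  define K where "K = max_coprime_divisor b p"
  have K: "K dvd p" "coprime K b" "k \<le> K"
    using max_coprime_divisor_greatest[OF assms _ dk(2)] dk(1) unfolding K_def by auto
  have "coprime K d"
    using K(2) dk(3) by (metis coprime_commute coprime_divisors coprime_power_right_iff dvd_refl)
  then have "K dvd k"
    using K(1) dk(1) by (metis coprime_dvd_mult_right_iff)
  moreover have "k > 0"
    using dk(1) assms by (cases k) auto
  ultimately have "K = k"
    using K(3) by (simp add: dvd_imp_le le_antisym)
  then show ?thesis
    using dk K(1) assms unfolding K_def by auto
qed

lemma zero_circuit_nth:
  assumes "zero_circuit b p qs" "i < length qs"
  shows "qs ! i = qs ! 0 * b ^ i mod p"
  using assms(2)
proof (induction i)
  case 0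
  then have "qs ! 0 \<in> set qs"
    by simp
  then have "qs ! 0 < p"
    using assms(1) unfolding zero_circuit_def aut_states_def by auto
  then show ?case by simp
next
  case (Suc i)
  have "qs ! Suc i = aut_delta b p (qs ! i) 0"
    using assms(1) Suc.prems unfolding zero_circuit_def by simp
  also have "\<dots> = qs ! i * b mod p"
    unfolding aut_delta_def by simp
  also have "\<dots> = (qs ! 0 * b ^ i mod p) * b mod p"
    using Suc by simp
  also have "\<dots> = qs ! 0 * b ^ Suc i mod p"
    by (simp add: mod_mult_left_eq mult.assoc mult.commute[of "b ^ i"])
  finally show ?case .
qed

lemma on_zero_circuit_iff:
  fixes b p n :: nat
  assumes "n < p"
  shows "on_zero_circuit b p n \<longleftrightarrow> (\<exists>m\<ge>1. n * b ^ m mod p = n)"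
proof
  assume "on_zero_circuit b p n"
  then obtain qs where qs: "zero_circuit b p qs" "n \<in> set qs"
    unfolding on_zero_circuit_def by blast
  define L where "L = length qs - 1"
  have "length qs \<ge> 2" "hd qs = last qs"
    using qs(1) unfolding zero_circuit_def by auto
  then have "qs ! L = qs ! 0"
    unfolding L_def by (metis hd_conv_nth last_conv_nth list.size(3) not_numeral_le_zero)
  then have closed: "qs ! 0 * b ^ L mod p = qs ! 0"
    using zero_circuit_nth[OF qs(1), of L] \<open>length qs \<ge> 2\<close> by (simp add: L_def)
  obtain j where j: "j < length qs" "n = qs ! 0 * b ^ j mod p"
    using qs zero_circuit_nth by (metis in_set_conv_nth)
  have "n * b ^ L mod p = qs ! 0 * b ^ j * b ^ L mod p"
    unfolding j(2) by (rule mod_mult_left_eq)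
  also have "\<dots> = qs ! 0 * b ^ L * b ^ j mod p"
    by (simp add: mult_ac)
  also have "\<dots> = (qs ! 0 * b ^ L mod p) * b ^ j mod p"
    by (rule mod_mult_left_eq[symmetric])
  also have "\<dots> = n"
    using closed j(2) by simp
  finally show "\<exists>m\<ge>1. n * b ^ m mod p = n"
    using \<open>length qs \<ge> 2\<close> by (intro exI[of _ L]) (auto simp: L_def)
next
  assume "\<exists>m\<ge>1. n * b ^ m mod p = n"
  then obtain m where m: "m \<ge> 1" "n * b ^ m mod p = n" by blast
  define qs where "qs = map (\<lambda>i. n * b ^ i mod p) [0..<m+1]"
  have "zero_circuit b p qs"
    unfolding zero_circuit_def aut_states_def aut_delta_def
  proof (intro conjI allI impI)
    show "2 \<le> length qs" using m unfolding qs_def by simp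
    show "set qs \<subseteq> {0..<p}" using assms unfolding qs_def by auto
    show "hd qs = last qs" using m assms unfolding qs_def by (simp add: hd_map last_map)
    fix i assume "Suc i < length qs"
    then show "(qs ! i * b + 0) mod p = qs ! Suc i" unfolding qs_def
      by (simp add: nth_append mod_mult_right_eq mult_ac del: upt_Suc)
  qed
  moreover have "n \<in> set qs"
    unfolding qs_def set_map by (rule rev_image_eqI[of 0]) (use assms m in simp_all)
  ultimately show "on_zero_circuit b p n"
    unfolding on_zero_circuit_def by blast
qed

lemma mult_totient_power_mod:
  fixes b d k n :: nat
  assumes "coprime k b" "d dvd n"
  shows "n * b ^ totient k mod (d * k) = n mod (d * k)"
proof -
  obtain j where j: "n = d * j" using assms(2) by blast
  have "[b ^ totient k = 1] (mod k)"
    using assms(1) by (intro euler_theorem) (simp add: coprime_commute)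
  then have "[j * b ^ totient k = j * 1] (mod k)"
    by (rule cong_scalar_left)
  then have "j * b ^ totient k mod k = j mod k"
    unfolding cong_def by simp
  then show ?thesis
    unfolding j by (metis mult.assoc mult_mod_right)
qed

lemma mult_power_mod_iterate:
  fixes b p n :: nat
  assumes "n * b ^ m mod p = n"
  shows "n * b ^ (m * t) mod p = n"
proof (induction t)
  case 0
  from assms have "n mod p = n" by (metis mod_mod_trivial)
  then show ?case by simp
next
  case (Suc t)
  have "n * b ^ (m * Suc t) mod p = (n * b ^ (m * t)) * b ^ m mod p"
    by (simp add: power_add mult_ac)
  also have "\<dots> = (n * b ^ (m * t) mod p) * b ^ m mod p"
    by (rule mod_mult_left_eq[symmetric])
  also have "\<dots> = n"
    using Suc assms by simp
  finally show ?case .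
qed

lemma dvd_of_mult_power_mod:
  fixes b d p n :: nat
  assumes "d dvd p" "d dvd b ^ e" "m \<ge> 1" "n * b ^ m mod p = n"
  shows "d dvd n"
proof -
  have "b ^ e dvd b ^ (m * e)"
    using assms(3) by (simp add: le_imp_power_dvd)
  then have "d dvd n * b ^ (m * e) mod p"
    using assms(1,2) by (meson dvd_mod dvd_mult dvd_trans)
  then show ?thesis
    using mult_power_mod_iterate[OF assms(4)] by simp
qed

lemma dvd_iff_mult_power_mod_periodic:
  fixes b d k n :: nat
  assumes "k > 0" "coprime k b" "d dvd b ^ e" "n < d * k"
  shows "d dvd n \<longleftrightarrow> (\<exists>m\<ge>1. n * b ^ m mod (d * k) = n)"
proof
  assume "d dvd n"
  then have "n * b ^ totient k mod (d * k) = n"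
    using mult_totient_power_mod[OF assms(2)] assms(4) by simp
  moreover have "totient k \<ge> 1"
    using assms(1) by (simp add: Suc_le_eq)
  ultimately show "\<exists>m\<ge>1. n * b ^ m mod (d * k) = n"
    by blast
next
  assume "\<exists>m\<ge>1. n * b ^ m mod (d * k) = n"
  then show "d dvd n"
    using dvd_of_mult_power_mod[OF _ assms(3)] by (meson dvd_triv_left)
qed

theorem lemma22:
  fixes b p :: nat and R :: "nat set"
  assumes "b > 1" and "p \<ge> 1" and "R \<subseteq> aut_states p"
  shows "\<forall>n \<in> aut_states p.
           (p div max_coprime_divisor b p) dvd n \<longleftrightarrow> on_zero_circuit b p n"
proof
  fix n assume "n \<in> aut_states p"
  then have n: "n < p" unfolding aut_states_def by simp
  define k where "k = max_coprime_divisor b p"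
  define d where "d = p div k"
  have dk: "p = d * k" "coprime k b" "d dvd b ^ p"
    using max_coprime_divisor_cofactor[of p b] assms(2) unfolding d_def k_def by auto
  have "k > 0"
    using dk(1) assms(2) by (cases k) auto
  then have "d dvd n \<longleftrightarrow> (\<exists>m\<ge>1. n * b ^ m mod p = n)"
    using dvd_iff_mult_power_mod_periodic[OF _ dk(2,3)] n dk(1) by simp
  then show "d dvd n \<longleftrightarrow> on_zero_circuit b p n"
    using on_zero_circuit_iff[OF n] by simp
qed

end
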